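(* Let $B$ and $W$ be independent standard real-valued Brownian motions. Then $$\frac{1}{4\pi^2}\int_{[0,1]^4}\int_{\mathbb{R}^2} p_1^2 p_2^2\, \mathbb{E}\!\left[e^{ip_1(B_{t_1}-W_{s_1}) + ip_2(B_{t_2}-W_{s_2})}\right] dp_1\,dp_2\,ds_1\,ds_2\,dt_1\,dt_2 = +\infty .$$ (The integrand is nonnegative, so the integral is well defined in $[0,\infty]$.) In particular, the second-order derivative intersection local time $L_{2,1,1} = \frac{i^2}{2\pi}\int_0^1\int_0^1\int_{\mathbb{R}} p^2 e^{ip(B_t - W_s)}\,dp\,ds\,dt$ of $B$ and $W$ (the case $d=1$, $k=2$, $T=1$, $H_1=H_2=\tfrac12$) does not have a finite second moment.
   Context: This serves as a counterexample to a claimed result that, for independent fractional Brownian motions with Hurst parameters $H_1,H_2$ and $\frac{H_1H_2}{H_1+H_2}(|k|+d)<1$, the $k$-th order derivative intersection local time exists in every $L^p$ and is exponentially integrable; with $d=1$, $k=2$, $H_1=H_2=\tfrac12$ this condition holds. The displayed integral is the formal expression for $\mathbb{E}[L_{2,1,1}^2]$. *)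

theory Defs
  imports "HOL-Probability.Probability"
begin

text \<open>A standard real-valued Brownian motion on the probability space M, indexed by
  times t \<ge> 0 (values at negative times are irrelevant).\<close>
definition std_BM :: "'a measure \<Rightarrow> (real \<Rightarrow> 'a \<Rightarrow> real) \<Rightarrow> bool" where
  "std_BM M B \<longleftrightarrow>
     prob_space M \<and>
     (\<forall>t. B t \<in> borel_measurable M) \<and>
     (\<forall>\<omega>\<in>space M. B 0 \<omega> = 0) \<and>
     (\<forall>s t. 0 \<le> s \<longrightarrow> s < t \<longrightarrow>
        distributed M lborel (\<lambda>\<omega>. B t \<omega> - B s \<omega>) (normal_density 0 (sqrt (t - s)))) \<and>
     (\<forall>(n::nat) (\<tau>::nat \<Rightarrow> real). 0 \<le> \<tau> 0 \<longrightarrow> (\<forall>i<n. \<tau> i < \<tau> (Suc i)) \<longrightarrow>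
        prob_space.indep_vars M (\<lambda>_. borel) (\<lambda>i \<omega>. B (\<tau> (Suc i)) \<omega> - B (\<tau> i) \<omega>) {..<n}) \<and>
     (AE \<omega> in M. continuous_on {0..} (\<lambda>t. B t \<omega>))"

end

theory Submission
  imports Defs "HOL-Real_Asymp.Real_Asymp"
begin

(*
  For 0 < t1 < t2 and 0 < s1 < s2, independence of increments gives the expectation in closed
  form, exp (-((p1 + p2)^2 (t1 + s1) + p2^2 b) / 2) with gap b = (t2 - t1) + (s2 - s1).
  Restricting the frequencies to the strip p1 ~ -b^(-1/2), |p1 + p2| <= 1/2 keeps the exponent
  bounded while p1^2 p2^2 ~ b^(-2) on a set of area ~ b^(-1/2), so the p-integral is at least a constant times b^(-5/2). Since 5/2 > 2,
  this singularity is not integrable near the diagonal t2 = t1, s2 = s1: the time integral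
  over the window t2 - t1, s2 - s1 <= eps is of order eps^(-1/2).
*)

lemma std_BM_char_increment:
  assumes "std_BM M B" "0 \<le> s" "s < t"
  shows "prob_space.expectation M (\<lambda>\<omega>. iexp (c * (B t \<omega> - B s \<omega>)))
           = complex_of_real (exp (- (c\<^sup>2 * (t - s)) / 2))"
proof -
  interpret prob_space M
    using assms(1) unfolding std_BM_def by auto
  define \<sigma> where "\<sigma> = sqrt (t - s)"
  have \<sigma>: "0 < \<sigma>"
    using assms unfolding \<sigma>_def by auto
  define Z where "Z \<omega> = (B t \<omega> - B s \<omega> - 0) / \<sigma>" for \<omega>
  have "distributed M lborel (\<lambda>\<omega>. B t \<omega> - B s \<omega>) (normal_density 0 \<sigma>)"
    using assms unfolding std_BM_def \<sigma>_def by auto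
  then have "distributed M lborel Z std_normal_density"
    unfolding Z_def by (rule normal_standard_normal_convert[OF \<sigma>, THEN iffD1])
  then have Z: "Z \<in> measurable M lborel" "distr M lborel Z = std_normal_distribution"
    unfolding distributed_def by auto
  have "char std_normal_distribution (c * \<sigma>) = (CLINT x|distr M lborel Z. iexp (c * \<sigma> * x))"
    by (simp add: char_def Z)
  also have "\<dots> = (CLINT \<omega>|M. iexp (c * \<sigma> * Z \<omega>))"
    by (rule integral_distr[OF Z(1)]) simp
  also have "\<dots> = (CLINT \<omega>|M. iexp (c * (B t \<omega> - B s \<omega>)))"
    using \<sigma> unfolding Z_def by simp
  finally have "(CLINT \<omega>|M. iexp (c * (B t \<omega> - B s \<omega>))) = complex_of_real (exp (- ((c * \<sigma>)\<^sup>2) / 2))"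
    by (simp add: char_std_normal_distribution)
  also have "(c * \<sigma>)\<^sup>2 = c\<^sup>2 * (t - s)"
    using assms unfolding \<sigma>_def by (simp add: power_mult_distrib)
  finally show ?thesis .
qed

lemma std_BM_char_pair:
  assumes B: "std_BM M B" and t: "0 < t1" "t1 < t2"
  shows "prob_space.expectation M (\<lambda>\<omega>. iexp (a * B t1 \<omega> + b * B t2 \<omega>))
           = complex_of_real (exp (- ((a + b)\<^sup>2 * t1 + b\<^sup>2 * (t2 - t1)) / 2))"
proof -
  interpret prob_space M
    using B unfolding std_BM_def by auto
  define \<tau> :: "nat \<Rightarrow> real" where "\<tau> i = (if i = 0 then 0 else if i = 1 then t1 else t2)" for i
  define k :: "nat \<Rightarrow> real" where "k i = (if i = 0 then a + b else b)" for i
  define X where "X i \<omega> = iexp (k i * (B (\<tau> (Suc i)) \<omega> - B (\<tau> i) \<omega>))" for i \<omega>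
  have independent_increments: "\<And>n \<tau>. 0 \<le> \<tau> 0 \<Longrightarrow> \<forall>i<n. \<tau> i < \<tau> (Suc i) \<Longrightarrow>
          indep_vars (\<lambda>_. borel) (\<lambda>i \<omega>. B (\<tau> (Suc i)) \<omega> - B (\<tau> i) \<omega>) {..<n}"
    using B unfolding std_BM_def by blast
  have "indep_vars (\<lambda>_. borel) (\<lambda>i \<omega>. B (\<tau> (Suc i)) \<omega> - B (\<tau> i) \<omega>) {..<2}"
    by (rule independent_increments) (use t in \<open>auto simp: \<tau>_def less_Suc_eq numeral_2_eq_2\<close>)
  then have indep: "indep_vars (\<lambda>_. borel) X {..<2}"
    unfolding X_def by (rule indep_vars_compose2) measurable
  have [measurable]: "B t \<in> borel_measurable M" for t
    using B unfolding std_BM_def by auto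
  have integrable: "integrable M (X i)" for i
    unfolding X_def by (intro integrable_iexp; (measurable | simp))
  have "(CLINT \<omega>|M. iexp (a * B t1 \<omega> + b * B t2 \<omega>)) = (CLINT \<omega>|M. (\<Prod>i<2. X i \<omega>))"
  proof (rule Bochner_Integration.integral_cong[OF refl])
    fix \<omega> assume "\<omega> \<in> space M"
    then have "B 0 \<omega> = 0"
      using B unfolding std_BM_def by auto
    then show "iexp (a * B t1 \<omega> + b * B t2 \<omega>) = (\<Prod>i<2. X i \<omega>)"
      by (simp add: numeral_2_eq_2 X_def \<tau>_def k_def exp_add[symmetric] algebra_simps)
  qed
  also have "\<dots> = (\<Prod>i<2. CLINT \<omega>|M. X i \<omega>)"
    by (rule indep_vars_lebesgue_integral[OF _ indep]) (simp_all add: integrable)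
  also have "\<dots> = (\<Prod>i<2. complex_of_real (exp (- ((k i)\<^sup>2 * (\<tau> (Suc i) - \<tau> i)) / 2)))"
    unfolding X_def using t by (intro prod.cong refl std_BM_char_increment[OF B]) (auto simp: \<tau>_def)
  also have "\<dots> = complex_of_real (exp (- ((a + b)\<^sup>2 * t1 + b\<^sup>2 * (t2 - t1)) / 2))"
    by (simp add: numeral_2_eq_2 \<tau>_def k_def flip: exp_add of_real_mult)
  finally show ?thesis .
qed

lemma std_BM_char_independent_difference:
  assumes B: "std_BM M B" and W: "std_BM M W"
    and indep: "prob_space.indep_var M (Pi\<^sub>M UNIV (\<lambda>_. borel)) (\<lambda>\<omega> t. B t \<omega>)
                                  (Pi\<^sub>M UNIV (\<lambda>_. borel)) (\<lambda>\<omega> s. W s \<omega>)"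
    and t: "0 < t1" "t1 < t2" and s: "0 < s1" "s1 < s2"
  shows "prob_space.expectation M (\<lambda>\<omega>. exp (\<i> * complex_of_real
                 (p1 * (B t1 \<omega> - W s1 \<omega>) + p2 * (B t2 \<omega> - W s2 \<omega>))))
    = complex_of_real (exp (- ((p1 + p2)\<^sup>2 * (t1 + s1) + p2\<^sup>2 * (t2 - t1 + s2 - s1)) / 2))"
proof -
  interpret prob_space M
    using B unfolding std_BM_def by auto
  define h where "h f = iexp (p1 * f t1 + p2 * f t2)" for f :: "real \<Rightarrow> real"
  define k where "k f = iexp ((- p1) * f s1 + (- p2) * f s2)" for f :: "real \<Rightarrow> real"
  have [measurable]: "B t \<in> borel_measurable M" "W t \<in> borel_measurable M" for t
    using B W unfolding std_BM_def by auto
  have "indep_var borel (h \<circ> (\<lambda>\<omega> t. B t \<omega>)) borel (k \<circ> (\<lambda>\<omega> s. W s \<omega>))"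
    by (rule indep_var_compose[OF indep]) (unfold h_def k_def, measurable)
  moreover have "integrable M (\<lambda>\<omega>. h (\<lambda>t. B t \<omega>))" "integrable M (\<lambda>\<omega>. k (\<lambda>s. W s \<omega>))"
    unfolding h_def k_def by (intro integrable_iexp; (measurable | simp))+
  ultimately have "expectation (\<lambda>\<omega>. h (\<lambda>t. B t \<omega>) * k (\<lambda>s. W s \<omega>))
      = expectation (\<lambda>\<omega>. h (\<lambda>t. B t \<omega>)) * expectation (\<lambda>\<omega>. k (\<lambda>s. W s \<omega>))"
    using indep_var_lebesgue_integral by (simp add: o_def)
  moreover have "h (\<lambda>t. B t \<omega>) * k (\<lambda>s. W s \<omega>)
      = exp (\<i> * complex_of_real (p1 * (B t1 \<omega> - W s1 \<omega>) + p2 * (B t2 \<omega> - W s2 \<omega>)))" for \<omega>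
    unfolding h_def k_def by (simp add: exp_add[symmetric] algebra_simps)
  ultimately have "prob_space.expectation M (\<lambda>\<omega>. exp (\<i> * complex_of_real
                 (p1 * (B t1 \<omega> - W s1 \<omega>) + p2 * (B t2 \<omega> - W s2 \<omega>))))
      = complex_of_real (exp (- ((p1 + p2)\<^sup>2 * t1 + p2\<^sup>2 * (t2 - t1)) / 2))
        * complex_of_real (exp (- ((- p1 + - p2)\<^sup>2 * s1 + (- p2)\<^sup>2 * (s2 - s1)) / 2))"
    unfolding h_def k_def std_BM_char_pair[OF B t] std_BM_char_pair[OF W s] by simp
  also have "\<dots> = complex_of_real (exp (- ((p1 + p2)\<^sup>2 * t1 + p2\<^sup>2 * (t2 - t1)) / 2
                                      + - ((- p1 + - p2)\<^sup>2 * s1 + (- p2)\<^sup>2 * (s2 - s1)) / 2))"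
    by (simp add: exp_add)
  also have "- ((p1 + p2)\<^sup>2 * t1 + p2\<^sup>2 * (t2 - t1)) / 2 + - ((- p1 + - p2)\<^sup>2 * s1 + (- p2)\<^sup>2 * (s2 - s1)) / 2
      = - ((p1 + p2)\<^sup>2 * (t1 + s1) + p2\<^sup>2 * (t2 - t1 + s2 - s1)) / 2"
    by (simp add: power2_eq_square field_simps)
  finally show ?thesis .
qed

lemma nn_integral_lborel_ge_Ioc:
  fixes f :: "real \<Rightarrow> ennreal"
  assumes "0 \<le> c" "0 \<le> d" "\<And>x. a < x \<Longrightarrow> x \<le> a + d \<Longrightarrow> ennreal c \<le> f x"
  shows "ennreal (c * d) \<le> (\<integral>\<^sup>+x. f x \<partial>lborel)"
proof -
  have "ennreal (c * d) = (\<integral>\<^sup>+x. ennreal c * indicator {a<..a + d} x \<partial>lborel)"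
    using assms(1,2) by (simp add: nn_integral_cmult_indicator ennreal_mult)
  also have "\<dots> \<le> (\<integral>\<^sup>+x. f x \<partial>lborel)"
    by (rule nn_integral_mono) (auto split: split_indicator intro: assms(3))
  finally show ?thesis .
qed

lemma Gaussian_weight_ge:
  fixes L a p1 p2 :: real
  assumes L: "1 \<le> L" and a: "0 \<le> a" "a \<le> 2"
    and p1: "- 2 * L < p1" "p1 \<le> - L" and p12: "\<bar>p1 + p2\<bar> \<le> 1/2"
  shows "exp (-5) / 4 * L ^ 4 \<le> p1\<^sup>2 * p2\<^sup>2 * exp (- ((p1 + p2)\<^sup>2 * a + p2\<^sup>2 / L\<^sup>2) / 2)"
proof -
  have p2: "L / 2 \<le> p2" "p2 \<le> 3 * L"
    using L p1 p12 by linarith+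
  have "L\<^sup>2 * (L / 2)\<^sup>2 \<le> (- p1)\<^sup>2 * p2\<^sup>2"
    using L p1 p2 by (intro mult_mono power_mono) auto
  then have weight: "exp (-5) / 4 * L ^ 4 \<le> exp (-5) * (p1\<^sup>2 * p2\<^sup>2)"
    by (simp add: power2_eq_square power4_eq_xxxx)
  have "(p1 + p2)\<^sup>2 \<le> (1/2)\<^sup>2"
    using p12 power_mono[of "\<bar>p1 + p2\<bar>" "1/2" 2] by simp
  then have "(p1 + p2)\<^sup>2 * a \<le> (1/2)\<^sup>2 * 2"
    using a by (intro mult_mono) auto
  moreover have "p2\<^sup>2 \<le> (3 * L)\<^sup>2"
    using L p2 by (intro power_mono) auto
  then have "p2\<^sup>2 / L\<^sup>2 \<le> 9"
    using L by (simp add: divide_le_eq power_mult_distrib)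
  ultimately have "exp (-5) \<le> exp (- ((p1 + p2)\<^sup>2 * a + p2\<^sup>2 / L\<^sup>2) / 2)"
    by (simp add: power_divide)
  then have "exp (-5) * (p1\<^sup>2 * p2\<^sup>2) \<le> exp (- ((p1 + p2)\<^sup>2 * a + p2\<^sup>2 / L\<^sup>2) / 2) * (p1\<^sup>2 * p2\<^sup>2)"
    by (rule mult_right_mono) simp
  with weight show ?thesis
    by (simp only: mult.commute[of _ "p1\<^sup>2 * p2\<^sup>2"])
qed

lemma nn_integral_Gaussian_weight_ge:
  fixes f :: "real \<Rightarrow> real \<Rightarrow> ennreal"
  assumes \<kappa>: "0 \<le> \<kappa>" and a: "0 \<le> a" "a \<le> 2" and b: "0 < b" "b \<le> 1"
    and f: "\<And>p1 p2. ennreal (\<kappa> * (p1\<^sup>2 * p2\<^sup>2 * exp (- ((p1 + p2)\<^sup>2 * a + p2\<^sup>2 * b) / 2))) \<le> f p1 p2"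
  shows "ennreal (\<kappa> * (exp (-5) / 4) * b powr (-5/2)) \<le> (\<integral>\<^sup>+p1. \<integral>\<^sup>+p2. f p1 p2 \<partial>lborel \<partial>lborel)"
proof -
  define L where "L = b powr (-1/2)"
  have L: "1 \<le> L"
    unfolding L_def using b powr_mono2'[of "-1/2" b 1] by simp
  have "L\<^sup>2 = b powr (-1)"
    unfolding L_def using b by (subst powr_power) auto
  then have "L\<^sup>2 = 1 / b"
    using b by (simp add: powr_minus_divide)
  then have b_eq: "b = 1 / L\<^sup>2"
    by simp
  have L5: "L ^ 5 = b powr (-5/2)"
    unfolding L_def using b by (simp add: powr_power)
  define c where "c = \<kappa> * (exp (-5) / 4 * L ^ 4)"
  have c: "0 \<le> c"
    unfolding c_def using \<kappa> by simp
  have "ennreal (c * 1 * L) \<le> (\<integral>\<^sup>+p1. \<integral>\<^sup>+p2. f p1 p2 \<partial>lborel \<partial>lborel)"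
  proof (rule nn_integral_lborel_ge_Ioc[where a = "-2 * L"])
    fix p1 assume p1: "-2 * L < p1" "p1 \<le> -2 * L + L"
    show "ennreal (c * 1) \<le> (\<integral>\<^sup>+p2. f p1 p2 \<partial>lborel)"
    proof (rule nn_integral_lborel_ge_Ioc[where a = "-p1 - 1/2"])
      fix p2 assume "-p1 - 1/2 < p2" "p2 \<le> -p1 - 1/2 + 1"
      then have "\<bar>p1 + p2\<bar> \<le> 1/2"
        unfolding abs_le_iff by linarith
      then have "exp (-5) / 4 * L ^ 4 \<le> p1\<^sup>2 * p2\<^sup>2 * exp (- ((p1 + p2)\<^sup>2 * a + p2\<^sup>2 / L\<^sup>2) / 2)"
        using L a p1 by (intro Gaussian_weight_ge) auto
      then have "c \<le> \<kappa> * (p1\<^sup>2 * p2\<^sup>2 * exp (- ((p1 + p2)\<^sup>2 * a + p2\<^sup>2 / L\<^sup>2) / 2))"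
        unfolding c_def using \<kappa> by (rule mult_left_mono)
      then have "c \<le> \<kappa> * (p1\<^sup>2 * p2\<^sup>2 * exp (- ((p1 + p2)\<^sup>2 * a + p2\<^sup>2 * b) / 2))"
        by (simp add: b_eq)
      then show "ennreal c \<le> f p1 p2"
        using f order_trans ennreal_leI by blast
    qed (use c in simp_all)
  qed (use c L in simp_all)
  moreover have "c * 1 * L = \<kappa> * (exp (-5) / 4) * b powr (-5/2)"
    unfolding c_def L5[symmetric] by (simp add: eval_nat_numeral)
  ultimately show ?thesis
    by metis
qed

lemma ennreal_eq_top_if_eventually_ge_at_top:
  fixes X :: ennreal
  assumes "filterlim f at_top F" "F \<noteq> bot" "\<forall>\<^sub>F x in F. ennreal (f x) \<le> X"
  shows "X = \<infinity>"
proof -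
  have "((\<lambda>x. ennreal (f x)) \<longlongrightarrow> \<infinity>) F"
    using assms(1) by (simp add: ennreal_tendsto_top_eq_at_top)
  then have "\<infinity> \<le> X"
    by (rule tendsto_le[OF assms(2) tendsto_const _ assms(3)])
  then show ?thesis
    by (simp add: top_unique)
qed

lemma nn_integral_eq_top_if_gap_singularity:
  fixes \<Phi> :: "real \<Rightarrow> real \<Rightarrow> real \<Rightarrow> real \<Rightarrow> ennreal"
  assumes C: "0 < C"
    and \<Phi>: "\<And>t1 t2 s1 s2. 0 < t1 \<Longrightarrow> t1 \<le> 1/2 \<Longrightarrow> t1 < t2 \<Longrightarrow> t2 \<le> t1 + 1/2 \<Longrightarrow>
             0 < s1 \<Longrightarrow> s1 \<le> 1/2 \<Longrightarrow> s1 < s2 \<Longrightarrow> s2 \<le> s1 + 1/2 \<Longrightarrow>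
             ennreal (C * (t2 - t1 + s2 - s1) powr (-5/2)) \<le> \<Phi> t1 t2 s1 s2"
  shows "(\<integral>\<^sup>+t1. \<integral>\<^sup>+t2. \<integral>\<^sup>+s1. \<integral>\<^sup>+s2. \<Phi> t1 t2 s1 s2 \<partial>lborel \<partial>lborel \<partial>lborel \<partial>lborel) = \<infinity>"
proof -
  have near_diagonal:
    "ennreal (C * (2 * \<epsilon>) powr (-5/2) * \<epsilon> * (1/2) * \<epsilon>)
       \<le> (\<integral>\<^sup>+t2. \<integral>\<^sup>+s1. \<integral>\<^sup>+s2. \<Phi> t1 t2 s1 s2 \<partial>lborel \<partial>lborel \<partial>lborel)"
    if t1: "0 < t1" "t1 \<le> 1/2" and \<epsilon>: "0 < \<epsilon>" "\<epsilon> \<le> 1/2" for t1 \<epsilon>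
  proof (rule nn_integral_lborel_ge_Ioc[where a = t1])
    fix t2 assume t2: "t1 < t2" "t2 \<le> t1 + \<epsilon>"
    show "ennreal (C * (2 * \<epsilon>) powr (-5/2) * \<epsilon> * (1/2))
        \<le> (\<integral>\<^sup>+s1. \<integral>\<^sup>+s2. \<Phi> t1 t2 s1 s2 \<partial>lborel \<partial>lborel)"
    proof (rule nn_integral_lborel_ge_Ioc[where a = 0])
      fix s1 :: real assume s1: "0 < s1" "s1 \<le> 0 + 1/2"
      show "ennreal (C * (2 * \<epsilon>) powr (-5/2) * \<epsilon>) \<le> (\<integral>\<^sup>+s2. \<Phi> t1 t2 s1 s2 \<partial>lborel)"
      proof (rule nn_integral_lborel_ge_Ioc[where a = s1])
        fix s2 assume s2: "s1 < s2" "s2 \<le> s1 + \<epsilon>"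
        have "(2 * \<epsilon>) powr (-5/2) \<le> (t2 - t1 + s2 - s1) powr (-5/2)"
          using t2 s2 by (intro powr_mono2') auto
        then have "ennreal (C * (2 * \<epsilon>) powr (-5/2)) \<le> ennreal (C * (t2 - t1 + s2 - s1) powr (-5/2))"
          using C by (intro ennreal_leI) simp
        also have "\<dots> \<le> \<Phi> t1 t2 s1 s2"
          using t1 t2 s1 s2 \<epsilon> by (intro \<Phi>) auto
        finally show "ennreal (C * (2 * \<epsilon>) powr (-5/2)) \<le> \<Phi> t1 t2 s1 s2" .
      qed (use C \<epsilon> in simp_all)
    qed (use C \<epsilon> in simp_all)
  qed (use C \<epsilon> in simp_all)
  have inner_top: "(\<integral>\<^sup>+t2. \<integral>\<^sup>+s1. \<integral>\<^sup>+s2. \<Phi> t1 t2 s1 s2 \<partial>lborel \<partial>lborel \<partial>lborel) = \<infinity>"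
    if t1: "0 < t1" "t1 \<le> 1/2" for t1
  proof (rule ennreal_eq_top_if_eventually_ge_at_top)
    show "filterlim (\<lambda>\<epsilon>. C * (2 * \<epsilon>) powr (-5/2) * \<epsilon> * (1/2) * \<epsilon>) at_top (at_right 0)"
      using C by real_asymp
    have "\<forall>\<^sub>F \<epsilon> in at_right 0. \<epsilon> \<in> {0<..<1/2 :: real}"
      by (rule eventually_at_right_real) simp
    then show "\<forall>\<^sub>F \<epsilon> in at_right 0. ennreal (C * (2 * \<epsilon>) powr (-5/2) * \<epsilon> * (1/2) * \<epsilon>)
            \<le> (\<integral>\<^sup>+t2. \<integral>\<^sup>+s1. \<integral>\<^sup>+s2. \<Phi> t1 t2 s1 s2 \<partial>lborel \<partial>lborel \<partial>lborel)"
      by eventually_elim (rule near_diagonal[OF t1]; simp)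
  qed simp
  show ?thesis
  proof (rule ennreal_eq_top_if_eventually_ge_at_top)
    show "filterlim (\<lambda>n. real n * (1/2)) at_top sequentially"
      by real_asymp
    show "\<forall>\<^sub>F n in sequentially. ennreal (real n * (1/2))
            \<le> (\<integral>\<^sup>+t1. \<integral>\<^sup>+t2. \<integral>\<^sup>+s1. \<integral>\<^sup>+s2. \<Phi> t1 t2 s1 s2 \<partial>lborel \<partial>lborel \<partial>lborel \<partial>lborel)"
      by (intro always_eventually allI nn_integral_lborel_ge_Ioc[where a = 0]) (simp_all add: inner_top)
  qed simp
qed

theorem mainTheorem5:
  fixes M :: "'a measure" and B W :: "real \<Rightarrow> 'a \<Rightarrow> real"
  assumes "std_BM M B" and "std_BM M W"
    and "prob_space.indep_var M (Pi\<^sub>M UNIV (\<lambda>_. borel)) (\<lambda>\<omega> t. B t \<omega>)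
                                (Pi\<^sub>M UNIV (\<lambda>_. borel)) (\<lambda>\<omega> s. W s \<omega>)"
  shows "(\<integral>\<^sup>+ t1. \<integral>\<^sup>+ t2. \<integral>\<^sup>+ s1. \<integral>\<^sup>+ s2. \<integral>\<^sup>+ p1. \<integral>\<^sup>+ p2.
           ennreal (1 / (4 * pi\<^sup>2) * Re (complex_of_real (p1\<^sup>2 * p2\<^sup>2) *
              prob_space.expectation M (\<lambda>\<omega>. exp (\<i> * complex_of_real
                 (p1 * (B t1 \<omega> - W s1 \<omega>) + p2 * (B t2 \<omega> - W s2 \<omega>))))))
           * indicator {0..1} t1 * indicator {0..1} t2 * indicator {0..1} s1 * indicator {0..1} s2
         \<partial>lborel \<partial>lborel \<partial>lborel \<partial>lborel \<partial>lborel \<partial>lborel) = \<infinity>"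
proof (rule nn_integral_eq_top_if_gap_singularity[where C = "1 / (4 * pi\<^sup>2) * (exp (-5) / 4)"])
  fix t1 t2 s1 s2 :: real
  assume box: "0 < t1" "t1 \<le> 1/2" "t1 < t2" "t2 \<le> t1 + 1/2"
    "0 < s1" "s1 \<le> 1/2" "s1 < s2" "s2 \<le> s1 + 1/2"
  note char = std_BM_char_independent_difference[OF assms box(1,3) box(5,7)]
  show "ennreal (1 / (4 * pi\<^sup>2) * (exp (-5) / 4) * (t2 - t1 + s2 - s1) powr (-5/2))
    \<le> (\<integral>\<^sup>+ p1. \<integral>\<^sup>+ p2.
           ennreal (1 / (4 * pi\<^sup>2) * Re (complex_of_real (p1\<^sup>2 * p2\<^sup>2) *
              prob_space.expectation M (\<lambda>\<omega>. exp (\<i> * complex_of_real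
                 (p1 * (B t1 \<omega> - W s1 \<omega>) + p2 * (B t2 \<omega> - W s2 \<omega>))))))
           * indicator {0..1} t1 * indicator {0..1} t2 * indicator {0..1} s1 * indicator {0..1} s2
         \<partial>lborel \<partial>lborel)"
    unfolding char
    by (rule nn_integral_Gaussian_weight_ge[where a = "t1 + s1"]) (use box in simp_all)
qed simp

end
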